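(* Let $n\ge 1$ and sample coupons $G_1,\dots,G_n$ independently with replacement, each sampling drawing each coupon with probability $1/n$. Let $A$ be a positive integer with $A\le n$, and let integers $k_1,\dots,k_A$ and $m_1,\dots,m_A$ satisfy $1\le k_1<\dots<k_A\le n$ and $\infty=m_0>m_1>\dots>m_A>m_{A+1}=0$; set $k_{A+1}=n$. Let $U(\mathbf{m},\mathbf{k})$ be the number of samplings needed until, for every $j=1,\dots,A$, the number of distinct coupons of which at least $m_j$ copies have been collected is at least $k_j$. For $k=k_1,k_1+1,\dots,n$ let $\phi_{0,k}(x)=\bigl[(S_{m_0}(x)-S_{m_1}(x))e^{-x}\bigr]^k$, and for $j=1,\dots,A$ and $k=k_{j+1},k_{j+1}+1,\dots,n$ let \[ \phi_{j,k}(x)=\sum_{w=k_j}^{k}\binom{k}{w}\bigl[(S_{m_j}(x)-S_{m_{j+1}}(x))e^{-x}\bigr]^{k-w}\phi_{j-1,w}(x). \] Then $E[U(\mathbf{m},\mathbf{k})]=n\int_0^\infty\bigl(1-\phi_{A,n}(x)\bigr)dx$.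
   Context: For an integer $m\ge1$, $S_m(x)=\sum_{j=0}^{m-1}\frac{x^j}{j!}$; $S_m(x)=0$ for $m\le 0$; and $S_\infty(x)=e^x$ (so $S_{m_0}(x)=e^x$). *)

theory Defs
  imports "HOL-Probability.Probability"
begin

fun S :: "enat \<Rightarrow> real \<Rightarrow> real" where
  "S (enat m) x = (\<Sum>j<m. x ^ j / fact j)"
| "S \<infinity> x = exp x"

text \<open>phi m k j kk x = \<phi>_{j,kk}(x) from the paper (m indexed 0..A+1, k indexed 1..A+1).\<close>
fun phi :: "(nat \<Rightarrow> enat) \<Rightarrow> (nat \<Rightarrow> nat) \<Rightarrow> nat \<Rightarrow> nat \<Rightarrow> real \<Rightarrow> real" where
  "phi m k 0 kk x = ((S (m 0) x - S (m 1) x) * exp (- x)) ^ kk"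
| "phi m k (Suc j) kk x =
     (\<Sum>w = k (Suc j)..kk. real (kk choose w)
        * ((S (m (Suc j)) x - S (m (Suc (Suc j))) x) * exp (- x)) ^ (kk - w)
        * phi m k j w x)"

definition goal_reached :: "nat \<Rightarrow> nat \<Rightarrow> (nat \<Rightarrow> enat) \<Rightarrow> (nat \<Rightarrow> nat) \<Rightarrow> nat stream \<Rightarrow> nat \<Rightarrow> bool" where
  "goal_reached n A m k \<omega> t \<longleftrightarrow>
     (\<forall>j\<in>{1..A}. card {c\<in>{..<n}. m j \<le> enat (count (mset (stake t \<omega>)) c)} \<ge> k j)"

definition U :: "nat \<Rightarrow> nat \<Rightarrow> (nat \<Rightarrow> enat) \<Rightarrow> (nat \<Rightarrow> nat) \<Rightarrow> nat stream \<Rightarrow> ennreal" where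
  "U n A m k \<omega> = (if \<exists>t. goal_reached n A m k \<omega> t
                   then of_nat (LEAST t. goal_reached n A m k \<omega> t) else \<top>)"

definition coupon_space :: "nat \<Rightarrow> nat stream measure" where
  "coupon_space n = stream_space (measure_pmf (pmf_of_set {..<n}))"

end

theory Submission
  imports Defs "HOL-Combinatorics.Multiset_Permutations"
begin

(*
  Poissonization. Let coupon i be collected c_i times, with independent Poisson(x) counts.
  It then lies in the band m_{j+1} <= c_i < m_j with probability (S_{m_j}(x) - S_{m_{j+1}}(x)) e^{-x},
  and unfolding the recursion for phi shows that phi_{A,n}(x) is exactly the probability that
  the count vector meets every goal. Hence 1 - phi_{A,n}(x) = e^{-nx} sum_t x^t beta_t, where
  beta_t sums 1 / prod_i c_i! over the count vectors of total t that miss the goal.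

  On the other side E[U] = sum_t P(U > t), and counting sequences of t samplings by their
  multinomial coefficients gives P(U > t) = t! beta_t / n^t. The two series agree termwise
  because n * int_0^oo e^{-nx} x^t dx = t! / n^t.
*)

section \<open>Level assignments and the recursion for \<phi>\<close>

(* g i = j encodes m_{j+1} <= c_i < m_j, so {i. g i < j'} are the coupons with at least m_{j'} copies. *)
definition level_assignments :: "(nat \<Rightarrow> nat) \<Rightarrow> nat \<Rightarrow> 'a set \<Rightarrow> ('a \<Rightarrow> nat) set" where
  "level_assignments k j I =
     {g \<in> I \<rightarrow>\<^sub>E {..j}. \<forall>j'\<in>{1..j}. k j' \<le> card {i\<in>I. g i < j'}}"

lemma level_assignments_0: "level_assignments k 0 I = {\<lambda>i\<in>I. 0}"
  by (auto simp: level_assignments_def PiE_def extensional_def fun_eq_iff)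

lemma level_assignments_Suc_iff:
  assumes "g \<in> I \<rightarrow>\<^sub>E {..Suc j}"
  defines "W \<equiv> {i\<in>I. g i \<le> j}"
  shows "g \<in> level_assignments k (Suc j) I \<longleftrightarrow>
           restrict g W \<in> level_assignments k j W \<and> k (Suc j) \<le> card W"
proof -
  have below: "{i\<in>I. g i < j'} = {i\<in>W. g i < j'}" if "j' \<le> Suc j" for j'
    using that by (auto simp: W_def)
  have "restrict g W \<in> W \<rightarrow>\<^sub>E {..j}"
    by (auto simp: W_def)
  moreover have "{i\<in>W. restrict g W i < j'} = {i\<in>W. g i < j'}" for j'
    by auto
  ultimately have restricted: "restrict g W \<in> level_assignments k j W \<longleftrightarrow>
      (\<forall>j'\<in>{1..j}. k j' \<le> card {i\<in>W. g i < j'})"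
    unfolding level_assignments_def by simp
  have "{i\<in>I. g i < Suc j} = W" "{1..Suc j} = insert (Suc j) {1..j}"
    by (auto simp: W_def)
  then have "g \<in> level_assignments k (Suc j) I \<longleftrightarrow>
      (\<forall>j'\<in>{1..j}. k j' \<le> card {i\<in>W. g i < j'}) \<and> k (Suc j) \<le> card W"
    using assms(1) by (auto simp: level_assignments_def below)
  with restricted show ?thesis by blast
qed

lemma finite_level_assignments: "finite I \<Longrightarrow> finite (level_assignments k j I)"
  unfolding level_assignments_def by (rule finite_subset[OF _ finite_PiE]) auto

lemma sum_level_assignments_Suc:
  fixes a :: "nat \<Rightarrow> 'b::comm_semiring_1"
  assumes "finite I"
  shows "(\<Sum>g\<in>level_assignments k (Suc j) I. \<Prod>i\<in>I. a (g i)) =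
     (\<Sum>W\<in>{W. W \<subseteq> I \<and> k (Suc j) \<le> card W}.
        a (Suc j) ^ (card I - card W) * (\<Sum>h\<in>level_assignments k j W. \<Prod>i\<in>W. a (h i)))"
proof -
  let ?G = "level_assignments k (Suc j) I"
  let ?T = "{W. W \<subseteq> I \<and> k (Suc j) \<le> card W}"
  let ?low = "\<lambda>g. {i\<in>I. g i \<le> j}"
  have "(\<Sum>g\<in>?G. \<Prod>i\<in>I. a (g i)) = (\<Sum>W\<in>?T. \<Sum>g\<in>{g\<in>?G. ?low g = W}. \<Prod>i\<in>I. a (g i))"
    using assms level_assignments_Suc_iff[of _ I j k]
    by (intro sum.group[symmetric] finite_level_assignments) (auto simp: level_assignments_def)
  also have "\<dots> = (\<Sum>W\<in>?T. a (Suc j) ^ (card I - card W) * (\<Sum>h\<in>level_assignments k j W. \<Prod>i\<in>W. a (h i)))"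
  proof (rule sum.cong[OF refl])
    fix W assume "W \<in> ?T"
    then have W: "W \<subseteq> I" "k (Suc j) \<le> card W" by auto
    let ?extend = "\<lambda>h. \<lambda>i\<in>I. if i \<in> W then h i else Suc j"
    have extend: "(\<Prod>i\<in>I. a (?extend h i)) = a (Suc j) ^ (card I - card W) * (\<Prod>i\<in>W. a (h i))" for h
    proof -
      have "(\<Prod>i\<in>I. a (?extend h i)) = (\<Prod>i\<in>I - W. a (Suc j)) * (\<Prod>i\<in>W. a (h i))"
        using assms W by (subst prod.subset_diff[of W]) (auto intro!: prod.cong arg_cong2[where f = "(*)"])
      then show ?thesis
        using assms W by (simp add: card_Diff_subset finite_subset)
    qed
    have "(\<Sum>g\<in>{g\<in>?G. ?low g = W}. \<Prod>i\<in>I. a (g i)) = (\<Sum>h\<in>level_assignments k j W. \<Prod>i\<in>I. a (?extend h i))"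
    proof (rule sum.reindex_bij_witness[where i = ?extend and j = "\<lambda>g. restrict g W"])
      show extend_restrict: "?extend (restrict g W) = g" if "g \<in> {g\<in>?G. ?low g = W}" for g
        using that by (fastforce simp: level_assignments_def fun_eq_iff PiE_def Pi_def extensional_def)
      show "(\<Prod>i\<in>I. a (?extend (restrict g W) i)) = (\<Prod>i\<in>I. a (g i))"
        if "g \<in> {g\<in>?G. ?low g = W}" for g
        by (simp only: extend_restrict[OF that])
      show "restrict g W \<in> level_assignments k j W" if "g \<in> {g\<in>?G. ?low g = W}" for g
        using that level_assignments_Suc_iff[of g I j k] by (auto simp: level_assignments_def)
      show "restrict (?extend h) W = h" if "h \<in> level_assignments k j W" for h
        using that W by (auto simp: level_assignments_def fun_eq_iff PiE_def extensional_def)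
      show "?extend h \<in> {g\<in>?G. ?low g = W}" if "h \<in> level_assignments k j W" for h
      proof -
        have h: "h \<in> W \<rightarrow>\<^sub>E {..j}" using that by (simp add: level_assignments_def)
        have ext: "?extend h \<in> I \<rightarrow>\<^sub>E {..Suc j}" and low: "?low (?extend h) = W"
          using h W by (auto simp: PiE_def Pi_def)
        have "restrict (?extend h) W = h"
          using h W by (auto simp: fun_eq_iff PiE_def extensional_def)
        then show ?thesis
          using level_assignments_Suc_iff[OF ext, of k] low that W by simp
      qed
    qed
    then show "(\<Sum>g\<in>{g\<in>?G. ?low g = W}. \<Prod>i\<in>I. a (g i)) =
        a (Suc j) ^ (card I - card W) * (\<Sum>h\<in>level_assignments k j W. \<Prod>i\<in>W. a (h i))"
      by (simp only: extend sum_distrib_left)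
  qed
  finally show ?thesis .
qed

lemma phi_eq_sum_level_assignments:
  assumes "finite I"
  shows "phi m k j (card I) x =
    (\<Sum>g\<in>level_assignments k j I. \<Prod>i\<in>I. (S (m (g i)) x - S (m (Suc (g i))) x) * exp (- x))"
  using assms
proof (induction j arbitrary: I)
  case 0
  then show ?case by (simp add: level_assignments_0)
next
  case (Suc j)
  define a where "a j = (S (m j) x - S (m (Suc j)) x) * exp (- x)" for j
  let ?T = "{W. W \<subseteq> I \<and> k (Suc j) \<le> card W}"
  have "(\<Sum>g\<in>level_assignments k (Suc j) I. \<Prod>i\<in>I. a (g i)) =
      (\<Sum>W\<in>?T. a (Suc j) ^ (card I - card W) * (\<Sum>h\<in>level_assignments k j W. \<Prod>i\<in>W. a (h i)))"
    by (rule sum_level_assignments_Suc[OF Suc.prems])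
  also have "\<dots> = (\<Sum>W\<in>?T. a (Suc j) ^ (card I - card W) * phi m k j (card W) x)"
    using Suc by (auto simp: a_def Suc.IH finite_subset intro!: sum.cong)
  also have "\<dots> = (\<Sum>w = k (Suc j)..card I.
      \<Sum>W\<in>{W\<in>?T. card W = w}. a (Suc j) ^ (card I - card W) * phi m k j (card W) x)"
    using Suc.prems by (intro sum.group[symmetric]) (auto intro: card_mono)
  also have "\<dots> = (\<Sum>w = k (Suc j)..card I. (card I choose w) * a (Suc j) ^ (card I - w) * phi m k j w x)"
  proof (rule sum.cong[OF refl])
    fix w assume "w \<in> {k (Suc j)..card I}"
    then have "{W\<in>?T. card W = w} = {W. W \<subseteq> I \<and> card W = w}" by auto
    then show "(\<Sum>W\<in>{W\<in>?T. card W = w}. a (Suc j) ^ (card I - card W) * phi m k j (card W) x) =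
        (card I choose w) * a (Suc j) ^ (card I - w) * phi m k j w x"
      using n_subsets[OF Suc.prems, of w] by simp
  qed
  also have "\<dots> = phi m k (Suc j) (card I) x"
    by (simp add: a_def)
  finally show ?case by (simp add: a_def)
qed

section \<open>Levels of collection counts\<close>

definition counts_reach_goal :: "nat \<Rightarrow> nat \<Rightarrow> (nat \<Rightarrow> enat) \<Rightarrow> (nat \<Rightarrow> nat) \<Rightarrow> (nat \<Rightarrow> nat) \<Rightarrow> bool" where
  "counts_reach_goal n A m k c \<longleftrightarrow> (\<forall>j\<in>{1..A}. k j \<le> card {i\<in>{..<n}. m j \<le> enat (c i)})"

lemma counts_reach_goal_cong:
  "(\<And>i. i < n \<Longrightarrow> c i = c' i) \<Longrightarrow> counts_reach_goal n A m k c \<longleftrightarrow> counts_reach_goal n A m k c'"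
  unfolding counts_reach_goal_def by (metis (mono_tags, lifting) lessThan_iff Collect_cong)

lemma goal_reached_iff_counts_reach_goal:
  "goal_reached n A m k \<omega> t \<longleftrightarrow> counts_reach_goal n A m k (count (mset (stake t \<omega>)))"
  by (simp add: goal_reached_def counts_reach_goal_def)

locale decreasing_thresholds =
  fixes m :: "nat \<Rightarrow> enat" and A :: nat
  assumes m_0: "m 0 = \<infinity>" and m_Suc_A: "m (Suc A) = 0"
    and m_decreasing: "\<And>j. j \<le> A \<Longrightarrow> m (Suc j) < m j"
begin

lemma m_strict_antimono: "i < j \<Longrightarrow> j \<le> Suc A \<Longrightarrow> m j < m i"
proof (induction j)
  case (Suc j)
  then show ?case
    using m_decreasing[of j] by (cases "i = j") auto
qed simp

definition level :: "nat \<Rightarrow> nat" where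
  "level c = (LEAST j. m (Suc j) \<le> enat c)"

lemma threshold_below_level: "m (Suc (level c)) \<le> enat c"
  unfolding level_def by (rule LeastI[of _ A]) (simp add: m_Suc_A)

lemma level_le: "level c \<le> A"
  unfolding level_def by (rule Least_le) (simp add: m_Suc_A)

lemma threshold_le_iff_level_less:
  assumes "j \<le> Suc A"
  shows "m j \<le> enat c \<longleftrightarrow> level c < j"
proof
  assume le: "m j \<le> enat c"
  show "level c < j"
  proof (cases j)
    case 0
    with le show ?thesis by (simp add: m_0)
  next
    case (Suc i)
    with le show ?thesis
      unfolding level_def by (metis Least_le le_imp_less_Suc)
  qed
next
  assume "level c < j"
  then have "m j \<le> m (Suc (level c))"
    using assms m_strict_antimono[of "Suc (level c)" j] by (cases "Suc (level c) = j") auto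
  then show "m j \<le> enat c" using threshold_below_level[of c] by (rule order_trans)
qed

lemma level_eq_iff: "j \<le> A \<Longrightarrow> level c = j \<longleftrightarrow> m (Suc j) \<le> enat c \<and> enat c < m j"
  using threshold_le_iff_level_less[of j c] threshold_le_iff_level_less[of "Suc j" c]
  by (auto simp: not_le)

lemma counts_reach_goal_iff_levels:
  "counts_reach_goal n A m k c \<longleftrightarrow> (\<lambda>i\<in>{..<n}. level (c i)) \<in> level_assignments k A {..<n}"
proof -
  have "{i\<in>{..<n}. m j \<le> enat (c i)} = {i\<in>{..<n}. (\<lambda>i\<in>{..<n}. level (c i)) i < j}" if "j \<le> A" for j
    using that threshold_le_iff_level_less by auto
  then show ?thesis
    using level_le by (auto simp: counts_reach_goal_def level_assignments_def)
qed

end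

section \<open>Poissonization\<close>

definition count_weight :: "nat \<Rightarrow> real \<Rightarrow> (nat \<Rightarrow> nat) \<Rightarrow> real" where
  "count_weight n x c = (\<Prod>i<n. x ^ c i / fact (c i))"

lemma has_sum_S: "0 \<le> x \<Longrightarrow> ((\<lambda>c. x ^ c / fact c) has_sum S b x) {c. enat c < b}"
proof (cases b)
  case (enat p)
  then have "{c. enat c < b} = {..<p}" by auto
  with enat show ?thesis by (simp add: has_sum_finiteI)
next
  case infinity
  assume "0 \<le> x"
  moreover have "(\<lambda>c. x ^ c / fact c) sums exp x"
    using exp_converges[of x] by (simp add: divide_inverse mult.commute)
  ultimately show ?thesis
    using infinity by (auto intro: sums_nonneg_imp_has_sum)
qed

lemma summable_on_exp_series: "0 \<le> x \<Longrightarrow> (\<lambda>c. x ^ c / fact c :: real) summable_on B"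
  using has_sum_S[of x \<infinity>] by (auto intro: summable_on_subset_banach dest: has_sum_imp_summable)

lemma infsum_count_weight_PiE:
  assumes "0 \<le> x"
  shows "infsum (count_weight n x) (PiE {..<n} B) = (\<Prod>i<n. infsum (\<lambda>c. x ^ c / fact c) (B i))"
  unfolding count_weight_def
  using assms summable_on_exp_series by (intro infsum_prod_PiE_abs) auto

lemma
  assumes "0 \<le> x"
  shows infsum_count_weight: "infsum (count_weight n x) ({..<n} \<rightarrow>\<^sub>E UNIV) = exp x ^ n"
    and summable_on_count_weight: "C \<subseteq> {..<n} \<rightarrow>\<^sub>E UNIV \<Longrightarrow> count_weight n x summable_on C"
proof -
  have "infsum (\<lambda>c. x ^ c / fact c) UNIV = exp x"
    using has_sum_S[OF assms, of \<infinity>] by (simp add: infsumI)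
  then show total: "infsum (count_weight n x) ({..<n} \<rightarrow>\<^sub>E UNIV) = exp x ^ n"
    using infsum_count_weight_PiE[OF assms, of n "\<lambda>_. UNIV"] by simp
  then have "count_weight n x summable_on ({..<n} \<rightarrow>\<^sub>E UNIV)"
    by (metis exp_not_eq_zero infsum_not_exists power_not_zero)
  then show "C \<subseteq> {..<n} \<rightarrow>\<^sub>E UNIV \<Longrightarrow> count_weight n x summable_on C"
    by (rule summable_on_subset_banach)
qed

lemma disjoint_PiE_preimages:
  assumes "g \<in> extensional I" "g' \<in> extensional I" "g \<noteq> g'"
  shows "PiE I (\<lambda>i. {c. f c = g i}) \<inter> PiE I (\<lambda>i. {c. f c = g' i}) = {}"
proof -
  obtain i where "i \<in> I" "g i \<noteq> g' i"
    using assms extensionalityI by metis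
  then show ?thesis
    by (auto simp: PiE_iff)
qed

context decreasing_thresholds
begin

lemma has_sum_level:
  assumes "0 \<le> x" and "j \<le> A"
  shows "((\<lambda>c. x ^ c / fact c) has_sum (S (m j) x - S (m (Suc j)) x)) {c. level c = j}"
proof -
  have "{c. level c = j} = {c. enat c < m j} - {c. enat c < m (Suc j)}"
    using assms(2) by (auto simp: level_eq_iff not_less)
  moreover have "{c. enat c < m (Suc j)} \<subseteq> {c. enat c < m j}"
    using m_decreasing[OF assms(2)] by auto
  ultimately show ?thesis
    using has_sum_S[OF assms(1)] by (simp add: has_sum_Diff)
qed

lemma goal_counts_eq_UN_level_boxes:
  "{c \<in> {..<n} \<rightarrow>\<^sub>E UNIV. counts_reach_goal n A m k c} =
     (\<Union>g\<in>level_assignments k A {..<n}. PiE {..<n} (\<lambda>i. {c. level c = g i}))"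
proof -
  have "c \<in> PiE {..<n} (\<lambda>i. {c. level c = g i}) \<longleftrightarrow>
      c \<in> {..<n} \<rightarrow>\<^sub>E UNIV \<and> g = (\<lambda>i\<in>{..<n}. level (c i))"
    if "g \<in> level_assignments k A {..<n}" for c g
    using that by (auto simp: level_assignments_def PiE_def Pi_def extensional_def fun_eq_iff)
  then show ?thesis
    by (auto simp: counts_reach_goal_iff_levels)
qed

lemma phi_eq_infsum_count_weight:
  assumes "0 \<le> x"
  shows "phi m k A n x =
    exp (- x) ^ n * infsum (count_weight n x) {c \<in> {..<n} \<rightarrow>\<^sub>E UNIV. counts_reach_goal n A m k c}"
proof -
  let ?L = "level_assignments k A {..<n}"
  let ?box = "\<lambda>g. PiE {..<n} (\<lambda>i. {c. level c = g i})"
  have box: "infsum (count_weight n x) (?box g) = (\<Prod>i<n. S (m (g i)) x - S (m (Suc (g i))) x)"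
    if "g \<in> ?L" for g
  proof -
    have "g i \<le> A" if "i < n" for i
      using \<open>g \<in> ?L\<close> that by (auto simp: level_assignments_def)
    then show ?thesis
      using assms by (simp add: infsum_count_weight_PiE infsumI[OF has_sum_level])
  qed
  have "phi m k A n x = (\<Sum>g\<in>?L. \<Prod>i<n. (S (m (g i)) x - S (m (Suc (g i))) x) * exp (- x))"
    using phi_eq_sum_level_assignments[of "{..<n}"] by simp
  also have "\<dots> = (\<Sum>g\<in>?L. exp (- x) ^ n * infsum (count_weight n x) (?box g))"
    by (simp add: box prod.distrib mult.commute cong: sum.cong)
  also have "\<dots> = exp (- x) ^ n * infsum (count_weight n x) (\<Union>g\<in>?L. ?box g)"
  proof -
    have "(\<Sum>g\<in>?L. infsum (count_weight n x) (?box g)) = infsum (count_weight n x) (\<Union>g\<in>?L. ?box g)"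
    proof (rule sum_infsum[OF finite_level_assignments])
      show "count_weight n x summable_on ?box g" for g
        using assms by (intro summable_on_count_weight) auto
      show "?box g \<inter> ?box g' = {}" if "g \<in> ?L" "g' \<in> ?L" and "g \<noteq> g'" for g g'
        using that disjoint_PiE_preimages[of g "{..<n}" g' level]
        by (auto simp: level_assignments_def PiE_def)
    qed simp
    then show ?thesis
      by (simp only: sum_distrib_left[symmetric])
  qed
  finally show ?thesis
    by (simp add: goal_counts_eq_UN_level_boxes)
qed

end

lemma sums_infsum_fibres:
  fixes f :: "'a \<Rightarrow> 'b::banach" and size :: "'a \<Rightarrow> nat"
  assumes "f summable_on C"
  shows "(\<lambda>t. infsum f {c\<in>C. size c = t}) sums infsum f C"
proof -
  let ?Sigma = "SIGMA t:UNIV. {c\<in>C. size c = t}"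
  have inj: "inj_on snd ?Sigma" and image: "snd ` ?Sigma = C"
    by (auto simp: inj_on_def image_iff)
  have Sigma: "(\<lambda>(t, c). f c) summable_on ?Sigma"
    using assms summable_on_reindex[OF inj, of f] by (simp add: image case_prod_unfold comp_def)
  have "infsum (\<lambda>(t, c). f c) ?Sigma = infsum f C"
    using infsum_reindex[OF inj, of f] by (simp add: image case_prod_unfold comp_def)
  then have "infsum (\<lambda>t. infsum f {c\<in>C. size c = t}) UNIV = infsum f C"
    using infsum_Sigma'_banach[of "\<lambda>t c. f c", OF Sigma] by simp
  then have "((\<lambda>t. infsum f {c\<in>C. size c = t}) has_sum infsum f C) UNIV"
    using has_sum_infsum[OF summable_on_Sigma_banach[of "\<lambda>t c. f c", OF Sigma]] by simp
  then show ?thesis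
    by (rule has_sum_imp_sums)
qed

definition bad_counts :: "nat \<Rightarrow> nat \<Rightarrow> (nat \<Rightarrow> enat) \<Rightarrow> (nat \<Rightarrow> nat) \<Rightarrow> nat \<Rightarrow> (nat \<Rightarrow> nat) set" where
  "bad_counts n A m k t = {c \<in> {..<n} \<rightarrow>\<^sub>E UNIV. \<not> counts_reach_goal n A m k c \<and> sum c {..<n} = t}"

definition bad_weight :: "nat \<Rightarrow> nat \<Rightarrow> (nat \<Rightarrow> enat) \<Rightarrow> (nat \<Rightarrow> nat) \<Rightarrow> nat \<Rightarrow> real" where
  "bad_weight n A m k t = (\<Sum>c\<in>bad_counts n A m k t. 1 / (\<Prod>i<n. fact (c i)))"

lemma finite_bad_counts: "finite (bad_counts n A m k t)"
proof (rule finite_subset)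
  show "bad_counts n A m k t \<subseteq> {..<n} \<rightarrow>\<^sub>E {..t}"
    by (auto simp: bad_counts_def PiE_def Pi_def intro: member_le_sum[of _ "{..<n}", simplified])
qed (simp add: finite_PiE)

lemma bad_weight_nonneg: "0 \<le> bad_weight n A m k t"
  unfolding bad_weight_def by (intro sum_nonneg divide_nonneg_nonneg prod_nonneg) auto

lemma infsum_count_weight_bad_counts:
  "infsum (count_weight n x) (bad_counts n A m k t) = x ^ t * bad_weight n A m k t"
proof -
  have "count_weight n x c = x ^ t * (1 / (\<Prod>i<n. fact (c i)))" if "c \<in> bad_counts n A m k t" for c
    using that by (auto simp: count_weight_def bad_counts_def prod_dividef power_sum[symmetric])
  then show ?thesis
    by (simp add: finite_bad_counts bad_weight_def sum_distrib_left)
qed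

lemma (in decreasing_thresholds) one_minus_phi_sums:
  assumes "0 \<le> x"
  shows "(\<lambda>t. exp (- (n * x)) * (x ^ t * bad_weight n A m k t)) sums (1 - phi m k A n x)"
proof -
  let ?all = "{..<n} \<rightarrow>\<^sub>E (UNIV :: nat set)"
  let ?good = "{c \<in> ?all. counts_reach_goal n A m k c}"
  have "1 - phi m k A n x = exp (- x) ^ n * (infsum (count_weight n x) ?all - infsum (count_weight n x) ?good)"
    using assms by (simp add: phi_eq_infsum_count_weight infsum_count_weight right_diff_distrib
        flip: power_mult_distrib exp_add)
  also have "\<dots> = exp (- (n * x)) * infsum (count_weight n x) (?all - ?good)"
    using assms by (subst infsum_Diff) (auto intro: summable_on_count_weight simp: exp_of_nat_mult[symmetric])
  finally have one_minus_phi: "1 - phi m k A n x = exp (- (n * x)) * infsum (count_weight n x) (?all - ?good)" .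
  have "{c \<in> ?all - ?good. sum c {..<n} = t} = bad_counts n A m k t" for t
    by (auto simp: bad_counts_def)
  then have "(\<lambda>t. x ^ t * bad_weight n A m k t) sums infsum (count_weight n x) (?all - ?good)"
    using sums_infsum_fibres[of "count_weight n x" "?all - ?good" "\<lambda>c. sum c {..<n}"] assms
    by (simp add: infsum_count_weight_bad_counts summable_on_count_weight)
  then show ?thesis
    unfolding one_minus_phi by (rule sums_mult)
qed

section \<open>Counting sequences of samplings\<close>

lemma count_sum_replicate_mset:
  "finite I \<Longrightarrow> count (\<Sum>i\<in>I. replicate_mset (c i) i) y = (if y \<in> I then c y else 0)"
proof -
  assume "finite I"
  have "count (\<Sum>i\<in>I. replicate_mset (c i) i) y = (\<Sum>i\<in>I. if y = i then c i else 0)"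
    by (simp add: count_sum)
  then show ?thesis
    using \<open>finite I\<close> by (simp add: sum.delta)
qed

lemma card_lists_with_counts:
  fixes n :: nat and c :: "nat \<Rightarrow> nat"
  assumes "c \<in> {..<n} \<rightarrow>\<^sub>E UNIV"
  shows "real (card {xs. set xs \<subseteq> {..<n} \<and> restrict (count (mset xs)) {..<n} = c}) =
    fact (sum c {..<n}) / (\<Prod>i<n. fact (c i))"
proof -
  define M where "M = (\<Sum>i<n. replicate_mset (c i) i)"
  have count_M: "count M y = (if y < n then c y else 0)" for y
    by (simp add: M_def count_sum_replicate_mset)
  have M_support: "set_mset M \<subseteq> {..<n}"
  proof
    fix y assume "y \<in># M"
    then show "y \<in> {..<n}"
      using count_M[of y] count_greater_zero_iff[of M y] by (auto split: if_splits)
  qed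
  have lists_eq: "{xs. set xs \<subseteq> {..<n} \<and> restrict (count (mset xs)) {..<n} = c} = permutations_of_multiset M"
  proof (intro set_eqI iffI)
    fix xs assume xs: "xs \<in> {xs. set xs \<subseteq> {..<n} \<and> restrict (count (mset xs)) {..<n} = c}"
    have "count (mset xs) y = count M y" for y
    proof (cases "y < n")
      case True
      then have "restrict (count (mset xs)) {..<n} y = c y"
        using xs by simp
      with True show ?thesis by (simp add: count_M)
    next
      case False
      with xs have "y \<notin> set xs" by auto
      with False show ?thesis by (simp add: count_M)
    qed
    then show "xs \<in> permutations_of_multiset M"
      by (simp add: permutations_of_multiset_def multiset_eqI)
  next
    fix xs assume "xs \<in> permutations_of_multiset M"
    then have "mset xs = M" by (simp add: permutations_of_multiset_def)
    moreover have "restrict (count M) {..<n} = c"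
      using assms by (auto simp: count_M fun_eq_iff PiE_def extensional_def)
    ultimately show "xs \<in> {xs. set xs \<subseteq> {..<n} \<and> restrict (count (mset xs)) {..<n} = c}"
      using M_support by (auto simp flip: set_mset_mset)
  qed
  have fact_M: "(\<Prod>y\<in>set_mset M. fact (count M y)) = (\<Prod>i<n. fact (c i) :: nat)"
  proof -
    have "(\<Prod>i<n. fact (c i) :: nat) = (\<Prod>i<n. fact (count M i))"
      by (simp add: count_M)
    also have "\<dots> = (\<Prod>y\<in>set_mset M. fact (count M y))"
      using M_support by (intro prod.mono_neutral_right) (auto simp: not_in_iff)
    finally show ?thesis ..
  qed
  have size_M: "size M = sum c {..<n}"
    by (simp add: M_def)
  have "card {xs. set xs \<subseteq> {..<n} \<and> restrict (count (mset xs)) {..<n} = c} *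
      (\<Prod>i<n. fact (c i)) = fact (sum c {..<n})"
    using card_permutations_of_multiset_aux[of M] by (simp only: lists_eq fact_M size_M)
  then have "real (card {xs. set xs \<subseteq> {..<n} \<and> restrict (count (mset xs)) {..<n} = c} *
      (\<Prod>i<n. fact (c i))) = real (fact (sum c {..<n}))"
    by (rule arg_cong)
  then have "real (card {xs. set xs \<subseteq> {..<n} \<and> restrict (count (mset xs)) {..<n} = c}) *
      (\<Prod>i<n. fact (c i)) = fact (sum c {..<n})"
    unfolding of_nat_mult of_nat_prod of_nat_fact .
  then show ?thesis
    by (simp add: eq_divide_eq)
qed

lemma card_lists_not_reaching_goal:
  fixes n :: nat
  shows "real (card {xs. set xs \<subseteq> {..<n} \<and> length xs = t \<and> \<not> counts_reach_goal n A m k (count (mset xs))})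
    = fact t * bad_weight n A m k t"
proof -
  let ?L = "{xs. set xs \<subseteq> {..<n} \<and> length xs = t \<and> \<not> counts_reach_goal n A m k (count (mset xs))}"
  let ?counts = "\<lambda>xs. restrict (count (mset xs)) {..<n}"
  have length_eq: "sum (?counts xs) {..<n} = length xs" if "set xs \<subseteq> {..<n}" for xs
    using sum_count_set[OF that] by (simp add: count_mset fun_eq_iff)
  have goal_eq: "counts_reach_goal n A m k (?counts xs) \<longleftrightarrow> counts_reach_goal n A m k (count (mset xs))" for xs
    by (rule counts_reach_goal_cong) simp
  have finite_L: "finite ?L"
    by (rule finite_subset[OF _ finite_lists_length_eq[of "{..<n}" t]]) auto
  have counts_bad: "?counts ` ?L \<subseteq> bad_counts n A m k t"
  proof
    fix c assume "c \<in> ?counts ` ?L"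
    then obtain xs where xs: "xs \<in> ?L" and c: "c = ?counts xs" by blast
    have "c \<in> {..<n} \<rightarrow>\<^sub>E UNIV"
      unfolding c by simp
    moreover have "sum c {..<n} = t" "\<not> counts_reach_goal n A m k c"
      using xs length_eq goal_eq unfolding c by auto
    ultimately show "c \<in> bad_counts n A m k t"
      by (simp add: bad_counts_def)
  qed
  have fibre: "{xs\<in>?L. ?counts xs = c} = {xs. set xs \<subseteq> {..<n} \<and> ?counts xs = c}"
    if "c \<in> bad_counts n A m k t" for c
    using that length_eq goal_eq by (auto simp: bad_counts_def)
  have "card ?L = (\<Sum>c\<in>bad_counts n A m k t. card {xs\<in>?L. ?counts xs = c})"
    using sum.group[OF finite_L finite_bad_counts counts_bad, of "\<lambda>_. 1::nat"] by simp
  then have "real (card ?L) = (\<Sum>c\<in>bad_counts n A m k t. real (card {xs\<in>?L. ?counts xs = c}))"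
    by simp
  also have "\<dots> = (\<Sum>c\<in>bad_counts n A m k t. fact t / (\<Prod>i<n. fact (c i)))"
  proof (rule sum.cong[OF refl])
    fix c assume c: "c \<in> bad_counts n A m k t"
    then have "c \<in> {..<n} \<rightarrow>\<^sub>E UNIV" "sum c {..<n} = t"
      by (auto simp: bad_counts_def)
    then show "real (card {xs\<in>?L. ?counts xs = c}) = fact t / (\<Prod>i<n. fact (c i))"
      unfolding fibre[OF c] using card_lists_with_counts[of c n] by simp
  qed
  also have "\<dots> = fact t * bad_weight n A m k t"
    by (simp add: bad_weight_def sum_distrib_left)
  finally show ?thesis .
qed

lemma card_lists_length_Suc:
  assumes "finite X"
  shows "card {xs. set xs \<subseteq> X \<and> length xs = Suc t \<and> P xs} =
    (\<Sum>y\<in>X. card {xs. set xs \<subseteq> X \<and> length xs = t \<and> P (y # xs)})"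
proof -
  let ?F = "\<lambda>y. {xs. set xs \<subseteq> X \<and> length xs = t \<and> P (y # xs)}"
  have "{xs. set xs \<subseteq> X \<and> length xs = Suc t \<and> P xs} = (\<Union>y\<in>X. (#) y ` ?F y)"
    by (auto simp: length_Suc_conv)
  moreover have "finite (?F y)" for y
    by (rule finite_subset[OF _ finite_lists_length_eq[OF assms, of t]]) auto
  ultimately have "card {xs. set xs \<subseteq> X \<and> length xs = Suc t \<and> P xs} = (\<Sum>y\<in>X. card ((#) y ` ?F y))"
    using assms by (simp only:) (rule card_UN_disjoint, auto)
  then show ?thesis
    by (simp add: card_image)
qed

lemma stake_pred_in_sets_stream_space:
  fixes p :: "'a::countable pmf"
  shows "{\<omega> \<in> space (stream_space p). P (stake t \<omega>)} \<in> sets (stream_space p)"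
proof -
  have sets: "sets (stream_space p) = sets (stream_space (count_space UNIV))"
    by (rule sets_stream_space_cong) simp
  have "stake t \<in> measurable (stream_space p) (count_space (UNIV :: 'a list set))"
    by (subst measurable_cong_sets[OF sets refl]) (rule measurable_stake)
  from measurable_sets[OF this, of "{xs. P xs}"] show ?thesis
    by (simp add: vimage_def Int_def conj_commute)
qed

lemma emeasure_stream_space_stake:
  fixes X :: "'a::countable set"
  assumes "finite X" "X \<noteq> {}"
  defines "M \<equiv> stream_space (measure_pmf (pmf_of_set X))"
  shows "emeasure M {\<omega> \<in> space M. P (stake t \<omega>)} =
    ennreal (card {xs. set xs \<subseteq> X \<and> length xs = t \<and> P xs} / card X ^ t)"
proof (induction t arbitrary: P)
  case 0
  interpret prob_space M
    unfolding M_def by (rule prob_space.prob_space_stream_space[OF prob_space_measure_pmf])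
  have "{xs. set xs \<subseteq> X \<and> length xs = 0 \<and> P xs} = (if P [] then {[]} else {})"
    by auto
  then show ?case
    by (simp add: emeasure_space_1)
next
  case (Suc t)
  have "emeasure M {\<omega> \<in> space M. P (stake (Suc t) \<omega>)} =
      (\<integral>\<^sup>+y. emeasure M {\<omega> \<in> space M. P (y # stake t \<omega>)} \<partial>measure_pmf (pmf_of_set X))"
    using stake_pred_in_sets_stream_space[of "pmf_of_set X" P "Suc t"] unfolding M_def
    by (subst prob_space.emeasure_stream_space[OF prob_space_measure_pmf]) (simp_all add: space_stream_space)
  also have "\<dots> = (\<integral>\<^sup>+y. ennreal (card {xs. set xs \<subseteq> X \<and> length xs = t \<and> P (y # xs)} / card X ^ t)
      \<partial>measure_pmf (pmf_of_set X))"
    using Suc.IH by (intro nn_integral_cong) simp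
  also have "\<dots> = (\<Sum>y\<in>X. ennreal (card {xs. set xs \<subseteq> X \<and> length xs = t \<and> P (y # xs)} / card X ^ t)) / card X"
    using assms(1,2) by (simp add: nn_integral_pmf_of_set)
  also have "\<dots> = ennreal ((\<Sum>y\<in>X. card {xs. set xs \<subseteq> X \<and> length xs = t \<and> P (y # xs)} / card X ^ t) / card X)"
    using assms(1,2) by (simp add: sum_ennreal divide_ennreal ennreal_of_nat_eq_real_of_nat card_gt_0_iff
        sum_nonneg)
  also have "\<dots> = ennreal (card {xs. set xs \<subseteq> X \<and> length xs = Suc t \<and> P xs} / card X ^ Suc t)"
    using assms(1) by (simp add: card_lists_length_Suc sum_divide_distrib[symmetric] field_simps)
  finally show ?case .
qed

section \<open>The expected waiting time\<close>

lemma goal_reached_mono: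
  assumes "goal_reached n A m k \<omega> t" "t \<le> t'"
  shows "goal_reached n A m k \<omega> t'"
proof -
  have "stake t' \<omega> = stake t \<omega> @ stake (t' - t) (sdrop t \<omega>)"
    using assms(2) by (metis le_add_diff_inverse stake_add)
  then have "count (mset (stake t \<omega>)) c \<le> count (mset (stake t' \<omega>)) c" for c
    by (simp del: stake_add)
  then have "card {c\<in>{..<n}. m j \<le> enat (count (mset (stake t \<omega>)) c)}
      \<le> card {c\<in>{..<n}. m j \<le> enat (count (mset (stake t' \<omega>)) c)}" for j
    by (intro card_mono) (auto elim: order_trans)
  with assms(1) show ?thesis
    unfolding goal_reached_def by (meson order_trans)
qed

lemma U_eq_suminf_not_reached:
  "U n A m k \<omega> = (\<Sum>t. indicator {\<omega>. \<not> goal_reached n A m k \<omega> t} \<omega>)"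
proof (cases "\<exists>t. goal_reached n A m k \<omega> t")
  case True
  define t\<^sub>0 where "t\<^sub>0 = (LEAST t. goal_reached n A m k \<omega> t)"
  have "\<not> goal_reached n A m k \<omega> t \<longleftrightarrow> t < t\<^sub>0" for t
    using True goal_reached_mono[of n A m k \<omega> t\<^sub>0 t] not_less_Least[of t "goal_reached n A m k \<omega>"]
    unfolding t\<^sub>0_def by (metis LeastI not_less)
  then have "(\<Sum>t. indicator {\<omega>. \<not> goal_reached n A m k \<omega> t} \<omega> :: ennreal) = (\<Sum>t<t\<^sub>0. 1)"
    by (subst suminf_finite[of "{..<t\<^sub>0}"]) auto
  with True show ?thesis
    by (simp add: U_def t\<^sub>0_def)
next
  case False
  then have "(\<Sum>t. indicator {\<omega>. \<not> goal_reached n A m k \<omega> t} \<omega> :: ennreal) = (\<Sum>t. 1)"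
    by simp
  also have "\<dots> = \<top>"
    using nn_integral_count_space_nat[of "\<lambda>_. 1::ennreal"] by (simp add: emeasure_count_space_infinite)
  finally show ?thesis
    using False by (simp add: U_def)
qed

lemma nn_integral_U:
  assumes "1 \<le> n"
  shows "(\<integral>\<^sup>+ \<omega>. U n A m k \<omega> \<partial>coupon_space n) =
    (\<Sum>t. ennreal (card {xs. set xs \<subseteq> {..<n} \<and> length xs = t \<and> \<not> counts_reach_goal n A m k (count (mset xs))}
      / real n ^ t))"
proof -
  let ?not_reached = "\<lambda>t. {\<omega> \<in> space (coupon_space n). \<not> counts_reach_goal n A m k (count (mset (stake t \<omega>)))}"
  have not_reached: "{\<omega>. \<not> goal_reached n A m k \<omega> t} = ?not_reached t" for t
    by (simp add: goal_reached_iff_counts_reach_goal coupon_space_def space_stream_space)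
  have emeasure: "emeasure (coupon_space n) (?not_reached t) =
      ennreal (card {xs. set xs \<subseteq> {..<n} \<and> length xs = t \<and> \<not> counts_reach_goal n A m k (count (mset xs))} / real n ^ t)"
    for t
    using assms emeasure_stream_space_stake[of "{..<n}"] by (simp add: coupon_space_def lessThan_empty_iff)
  have "?not_reached t \<in> sets (coupon_space n)" for t
    unfolding coupon_space_def by (rule stake_pred_in_sets_stream_space)
  then have "(\<integral>\<^sup>+ \<omega>. U n A m k \<omega> \<partial>coupon_space n) = (\<Sum>t. emeasure (coupon_space n) (?not_reached t))"
    by (simp add: U_eq_suminf_not_reached not_reached nn_integral_suminf)
  then show ?thesis
    by (simp add: emeasure)
qed

lemma nn_integral_power_times_exp:
  assumes "0 < l"
  shows "(\<integral>\<^sup>+x\<in>{0..}. ennreal (x ^ t * exp (- (l * x))) \<partial>lborel) = ennreal (fact t / l ^ Suc t)"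
proof -
  have "ennreal (x ^ t * exp (- (l * x))) * indicator {0..} x =
      ennreal (fact t / l ^ Suc t) * ennreal (erlang_density t l x)" for x :: real
    using assms by (cases "0 \<le> x") (simp_all add: erlang_density_def ennreal_mult[symmetric] field_simps)
  then have "(\<integral>\<^sup>+x\<in>{0..}. ennreal (x ^ t * exp (- (l * x))) \<partial>lborel) =
      ennreal (fact t / l ^ Suc t) * (\<integral>\<^sup>+x. ennreal (erlang_density t l x) \<partial>lborel)"
    by (simp add: nn_integral_cmult)
  also have "(\<integral>\<^sup>+x. ennreal (erlang_density t l x) \<partial>lborel) = 1"
    using nn_integral_erlang_ith_moment[OF assms, of t 0] by simp
  finally show ?thesis by simp
qed

lemma (in decreasing_thresholds) nn_integral_one_minus_phi:
  assumes "1 \<le> n"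
  shows "ennreal n * (\<integral>\<^sup>+x\<in>{0..}. ennreal (1 - phi m k A n x) \<partial>lborel) =
    (\<Sum>t. ennreal (fact t * bad_weight n A m k t / real n ^ t))"
proof -
  let ?term = "\<lambda>t (x::real). ennreal (bad_weight n A m k t * (x ^ t * exp (- (n * x))))"
  have "ennreal (1 - phi m k A n x) = (\<Sum>t. ?term t x)" if "0 \<le> x" for x
    using one_minus_phi_sums[of x n k] that bad_weight_nonneg
    by (subst suminf_ennreal2) (auto simp: sums_iff mult_ac)
  then have "(\<integral>\<^sup>+x\<in>{0..}. ennreal (1 - phi m k A n x) \<partial>lborel) = (\<integral>\<^sup>+x\<in>{0..}. (\<Sum>t. ?term t x) \<partial>lborel)"
    by (intro nn_integral_cong) (simp split: split_indicator)
  also have "\<dots> = (\<Sum>t. \<integral>\<^sup>+x\<in>{0..}. ?term t x \<partial>lborel)"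
    by (subst nn_integral_suminf[symmetric]) (auto simp: ennreal_suminf_multc)
  also have "\<dots> = (\<Sum>t. ennreal (bad_weight n A m k t * (fact t / n ^ Suc t)))"
  proof (rule suminf_cong)
    fix t
    have "(\<integral>\<^sup>+x\<in>{0..}. ?term t x \<partial>lborel) =
        ennreal (bad_weight n A m k t) * (\<integral>\<^sup>+x\<in>{0..}. ennreal (x ^ t * exp (- (n * x))) \<partial>lborel)"
      using bad_weight_nonneg
      by (subst nn_integral_cmult[symmetric]) (auto simp: ennreal_mult' mult.assoc intro!: nn_integral_cong)
    also have "\<dots> = ennreal (bad_weight n A m k t * (fact t / n ^ Suc t))"
      using assms bad_weight_nonneg by (simp add: nn_integral_power_times_exp ennreal_mult[symmetric])
    finally show "(\<integral>\<^sup>+x\<in>{0..}. ?term t x \<partial>lborel) = ennreal (bad_weight n A m k t * (fact t / n ^ Suc t))" .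
  qed
  finally show ?thesis
    using assms bad_weight_nonneg
    by (simp add: ennreal_suminf_cmult[symmetric] ennreal_mult[symmetric] field_simps)
qed

theorem corollary2:
  fixes n A :: nat and k :: "nat \<Rightarrow> nat" and m :: "nat \<Rightarrow> enat"
  assumes "n \<ge> 1" and "1 \<le> A" and "A \<le> n"
    and "1 \<le> k 1" and "\<And>j. 1 \<le> j \<Longrightarrow> j < A \<Longrightarrow> k j < k (Suc j)" and "k A \<le> n"
    and "k (Suc A) = n"
    and "m 0 = \<infinity>" and "m (Suc A) = 0"
    and "\<And>j. j \<le> A \<Longrightarrow> m (Suc j) < m j"
  shows "(\<integral>\<^sup>+ \<omega>. U n A m k \<omega> \<partial>coupon_space n)
         = ennreal (real n) * (\<integral>\<^sup>+ x\<in>{0..}. ennreal (1 - phi m k A n x) \<partial>lborel)"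
proof -
  interpret decreasing_thresholds m A
    using assms by unfold_locales auto
  have "(\<integral>\<^sup>+ \<omega>. U n A m k \<omega> \<partial>coupon_space n) =
    (\<Sum>t. ennreal (card {xs. set xs \<subseteq> {..<n} \<and> length xs = t \<and> \<not> counts_reach_goal n A m k (count (mset xs))}
      / real n ^ t))"
    using assms(1) by (rule nn_integral_U)
  also have "\<dots> = (\<Sum>t. ennreal (fact t * bad_weight n A m k t / real n ^ t))"
    by (simp only: card_lists_not_reaching_goal)
  also have "\<dots> = ennreal (real n) * (\<integral>\<^sup>+ x\<in>{0..}. ennreal (1 - phi m k A n x) \<partial>lborel)"
    using assms(1) by (rule nn_integral_one_minus_phi[symmetric])
  finally show ?thesis .
qed

end
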